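(* Let $n\ge2$, $\kappa\ge1$ and $G\in\mathcal G_{[n;\kappa]}$ with payoff structure vectors $V_1^c,\dots,V_n^c$. Then $G$ is skew-symmetric if and only if $$V_i^c=\mathrm{sgn}(\sigma)\,V_{\sigma(i)}^c\,T_\sigma\quad\text{for all }\sigma\in\mathbf S_n\text{ and }i=1,\dots,n,$$ where $T_\sigma=\Phi_{\sigma^{-1}(1)}*\Phi_{\sigma^{-1}(2)}*\cdots*\Phi_{\sigma^{-1}(n)}$.
   Context: $\delta_\kappa^j$ is the $j$-th column of $I_\kappa$, $\mathbf 1_m$ is the all-ones column vector of length $m$. For $i=1,\dots,n$ let $\Phi_i=\mathbf 1_{\kappa^{i-1}}^T\otimes I_\kappa\otimes\mathbf 1_{\kappa^{n-i}}^T\in\mathbb R^{\kappa\times\kappa^n}$, so that $\Phi_i(x_1\otimes\cdots\otimes x_n)=x_i$ for $x_j\in\{\delta_\kappa^1,\dots,\delta_\kappa^\kappa\}$. The Khatri–Rao product of $A\in\mathbb R^{p\times m}$ and $B\in\mathbb R^{q\times m}$ is $A*B=[\mathrm{Col}_1(A)\otimes\mathrm{Col}_1(B),\dots,\mathrm{Col}_m(A)\otimes\mathrm{Col}_m(B)]\in\mathbb R^{pq\times m}$ (iterated left to right). A finite game $G\in\mathcal G_{[n;\kappa]}$ has players $\{1,\dots,n\}$, each with strategy set $\{1,\dots,\kappa\}$, strategy $j$ identified with $\delta_\kappa^j$, and payoffs $c_i$; $V_i^c\in\mathbb R^{\kappa^n}$ is the unique row vector with $c_i(x_1,\dots,x_n)=V_i^c(x_1\otimes\cdots\otimes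 x_n)$ for all $x_j\in\{\delta_\kappa^1,\dots,\delta_\kappa^\kappa\}$. $\mathbf S_n$ is the symmetric group. $G$ is skew-symmetric if for every $\sigma\in\mathbf S_n$, every $i$ and every profile, $c_i(x_1,\dots,x_n)=\mathrm{sgn}(\sigma)\,c_{\sigma(i)}(x_{\sigma^{-1}(1)},\dots,x_{\sigma^{-1}(n)})$. *)

theory Defs
  imports "Jordan_Normal_Form.Matrix" "HOL-Combinatorics.Permutations" "HOL-Library.FuncSet"
begin

text \<open>All vectors are represented as matrices: column vectors are m x 1 matrices,
row vectors are 1 x m matrices. Players are 1..n, strategies are 1..kappa.\<close>

definition kron :: "real mat \<Rightarrow> real mat \<Rightarrow> real mat" where
  "kron A B = mat (dim_row A * dim_row B) (dim_col A * dim_col B)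
     (\<lambda>(r, c). A $$ (r div dim_row B, c div dim_col B) * B $$ (r mod dim_row B, c mod dim_col B))"

definition khatri_rao :: "real mat \<Rightarrow> real mat \<Rightarrow> real mat" where
  "khatri_rao A B = mat (dim_row A * dim_row B) (dim_col A)
     (\<lambda>(r, c). A $$ (r div dim_row B, c) * B $$ (r mod dim_row B, c))"

definition delta :: "nat \<Rightarrow> nat \<Rightarrow> real mat" where
  "delta \<kappa> j = mat \<kappa> 1 (\<lambda>(r, c). if r = j - 1 then 1 else 0)"

definition ones :: "nat \<Rightarrow> real mat" where
  "ones m = mat m 1 (\<lambda>_. 1)"

definition Phi :: "nat \<Rightarrow> nat \<Rightarrow> nat \<Rightarrow> real mat" where
  "Phi \<kappa> n i = kron (kron (transpose_mat (ones (\<kappa> ^ (i - 1)))) (1\<^sub>m \<kappa>))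
                     (transpose_mat (ones (\<kappa> ^ (n - i))))"

definition T_mat :: "nat \<Rightarrow> nat \<Rightarrow> (nat \<Rightarrow> nat) \<Rightarrow> real mat" where
  "T_mat \<kappa> n \<sigma> = foldl (\<lambda>A i. khatri_rao A (Phi \<kappa> n (inv_into UNIV \<sigma> i))) (Phi \<kappa> n (inv_into UNIV \<sigma> 1)) [2..<n+1]"

definition profiles :: "nat \<Rightarrow> nat \<Rightarrow> (nat \<Rightarrow> nat) set" where
  "profiles n \<kappa> = {1..n} \<rightarrow>\<^sub>E {1..\<kappa>}"

definition prof_kron :: "nat \<Rightarrow> nat \<Rightarrow> (nat \<Rightarrow> nat) \<Rightarrow> real mat" where
  "prof_kron n \<kappa> x = foldl (\<lambda>A j. kron A (delta \<kappa> (x j))) (1\<^sub>m 1) [1..<n+1]"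

text \<open>A game in G_[n;kappa] is given by payoffs c i x (player i, profile x).
  V_i^c is the unique row vector with c_i(x) = V_i^c (x_1 \<otimes> ... \<otimes> x_n).\<close>
definition payoff_vec :: "nat \<Rightarrow> nat \<Rightarrow> (nat \<Rightarrow> (nat \<Rightarrow> nat) \<Rightarrow> real) \<Rightarrow> nat \<Rightarrow> real mat" where
  "payoff_vec n \<kappa> c i = (THE V. V \<in> carrier_mat 1 (\<kappa> ^ n) \<and>
      (\<forall>x\<in>profiles n \<kappa>. V * prof_kron n \<kappa> x = mat 1 1 (\<lambda>_. c i x)))"

definition skew_symmetric :: "nat \<Rightarrow> nat \<Rightarrow> (nat \<Rightarrow> (nat \<Rightarrow> nat) \<Rightarrow> real) \<Rightarrow> bool" where
  "skew_symmetric n \<kappa> c \<longleftrightarrow>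
     (\<forall>\<sigma>. \<sigma> permutes {1..n} \<longrightarrow>
        (\<forall>i\<in>{1..n}. \<forall>x\<in>profiles n \<kappa>.
           c i x = of_int (sign \<sigma>) * c (\<sigma> i) (\<lambda>j\<in>{1..n}. x (inv_into UNIV \<sigma> j))))"

end

theory Submission
  imports Defs
begin

(* A strategy profile x is encoded by the position of the single 1 in
   x_1 \<otimes> ... \<otimes> x_n, namely the base-\<kappa> numeral with digits x_1 - 1, ..., x_n - 1.
   All matrices in the statement are then 0-1 matrices with exactly one 1 in every column:
   in column r of \<Phi>_i it sits in row "digit i of r", and a Khatri-Rao product of such
   matrices concatenates these row indices into a numeral. Hence T_\<sigma> maps the index of a
   profile to the index of the permuted profile, V_i lists the payoffs c_i(x) by index, and
   V_i T_\<sigma> lists c_i at the permuted profiles. Read column by column, the matrix identity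
   is exactly skew-symmetry. *)

definition sel_mat :: "nat \<Rightarrow> nat \<Rightarrow> (nat \<Rightarrow> nat) \<Rightarrow> real mat" where
  "sel_mat nr nc h = mat nr nc (\<lambda>(r, c). if r = h c then 1 else 0)"

definition digit :: "nat \<Rightarrow> nat \<Rightarrow> nat \<Rightarrow> nat \<Rightarrow> nat" where
  "digit K m j r = r div K ^ (m - j) mod K"

definition radix_value :: "nat \<Rightarrow> nat \<Rightarrow> (nat \<Rightarrow> nat) \<Rightarrow> nat" where
  "radix_value K m d = foldl (\<lambda>v j. v * K + d j) 0 [1..<m+1]"

definition profile_index :: "nat \<Rightarrow> nat \<Rightarrow> (nat \<Rightarrow> nat) \<Rightarrow> nat" where
  "profile_index K n x = radix_value K n (\<lambda>j. x j - 1)"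

definition profile_of_index :: "nat \<Rightarrow> nat \<Rightarrow> nat \<Rightarrow> (nat \<Rightarrow> nat)" where
  "profile_of_index K n r = (\<lambda>j\<in>{1..n}. digit K n j r + 1)"

lemma radix_value_0 [simp]: "radix_value K 0 d = 0"
  by (simp add: radix_value_def)

lemma radix_value_Suc: "radix_value K (Suc m) d = radix_value K m d * K + d (Suc m)"
  by (simp add: radix_value_def)

lemma radix_value_from_first:
  assumes "m \<ge> 1"
  shows "radix_value K m d = foldl (\<lambda>v j. v * K + d j) (d 1) [2..<m+1]"
  unfolding radix_value_def using assms by (subst upt_conv_Cons) (auto simp: numeral_2_eq_2)

lemma radix_value_cong:
  "(\<And>j. j \<in> {1..m} \<Longrightarrow> d j = d' j) \<Longrightarrow> radix_value K m d = radix_value K m d'"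
  by (induction m) (simp_all add: radix_value_Suc)

lemma radix_value_less:
  assumes "\<And>j. j \<in> {1..m} \<Longrightarrow> d j < K"
  shows "radix_value K m d < K ^ m"
  using assms
proof (induction m)
  case 0
  then show ?case by simp
next
  case (Suc m)
  have "radix_value K m d * K + d (Suc m) < (radix_value K m d + 1) * K"
    using Suc.prems[of "Suc m"] by simp
  also have "\<dots> \<le> K ^ m * K"
    using Suc by (intro mult_right_mono) auto
  finally show ?case
    by (simp add: radix_value_Suc mult.commute)
qed

lemma digit_Suc: "j \<le> m \<Longrightarrow> digit K (Suc m) j r = digit K m j (r div K)"
  by (simp add: digit_def Suc_diff_le div_mult2_eq mult.commute)

lemma digit_Suc_last: "digit K (Suc m) (Suc m) r = r mod K"
  by (simp add: digit_def)

lemma digit_less: "K \<ge> 1 \<Longrightarrow> digit K m j r < K"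
  by (simp add: digit_def)

lemma digit_radix_value:
  assumes "\<And>j. j \<in> {1..m} \<Longrightarrow> d j < K" and "j \<in> {1..m}"
  shows "digit K m j (radix_value K m d) = d j"
  using assms
proof (induction m arbitrary: j)
  case 0
  then show ?case by simp
next
  case (Suc m)
  have "d (Suc m) < K"
    using Suc.prems(1) by simp
  then have quot: "radix_value K (Suc m) d div K = radix_value K m d"
    and rem: "radix_value K (Suc m) d mod K = d (Suc m)"
    by (simp_all add: radix_value_Suc)
  show ?case
  proof (cases "j = Suc m")
    case True
    then show ?thesis
      using rem by (simp add: digit_Suc_last)
  next
    case False
    then have "j \<in> {1..m}"
      using Suc.prems(2) by simp
    then show ?thesis
      using Suc.IH Suc.prems(1) quot by (simp add: digit_Suc)
  qed
qed

lemma radix_value_digit: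
  assumes "r < K ^ m"
  shows "radix_value K m (\<lambda>j. digit K m j r) = r"
  using assms
proof (induction m arbitrary: r)
  case 0
  then show ?case by simp
next
  case (Suc m)
  have "radix_value K m (\<lambda>j. digit K (Suc m) j r) = radix_value K m (\<lambda>j. digit K m j (r div K))"
    by (rule radix_value_cong) (simp add: digit_Suc)
  also have "\<dots> = r div K"
    using Suc by (intro Suc.IH) (simp add: less_mult_imp_div_less mult.commute)
  finally show ?case
    by (simp add: radix_value_Suc digit_Suc_last)
qed

lemma permutes_inv_into_in:
  assumes "\<sigma> permutes S" and "k \<in> S"
  shows "inv_into UNIV \<sigma> k \<in> S"
  using permutes_in_image[OF permutes_inv[OF assms(1)]] assms(2) by simp

lemma profile_in_range: "x \<in> profiles n K \<Longrightarrow> j \<in> {1..n} \<Longrightarrow> x j \<in> {1..K}"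
  by (auto simp: profiles_def)

lemma profile_of_index_in_profiles: "K \<ge> 1 \<Longrightarrow> profile_of_index K n r \<in> profiles n K"
  by (auto simp: profile_of_index_def profiles_def digit_def Suc_le_eq)

lemma profile_index_less: "x \<in> profiles n K \<Longrightarrow> profile_index K n x < K ^ n"
  unfolding profile_index_def
  by (rule radix_value_less) (use profile_in_range in fastforce)

lemma profile_of_index_profile_index:
  assumes "x \<in> profiles n K"
  shows "profile_of_index K n (profile_index K n x) = x"
proof
  fix j
  show "profile_of_index K n (profile_index K n x) j = x j"
  proof (cases "j \<in> {1..n}")
    case True
    have "digit K n j (profile_index K n x) = x j - 1"
      unfolding profile_index_def
      by (rule digit_radix_value) (use assms True profile_in_range in fastforce)+
    then show ?thesis
      using True profile_in_range[OF assms True] by (simp add: profile_of_index_def)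
  next
    case False
    then show ?thesis
      using assms by (auto simp: profile_of_index_def profiles_def PiE_def extensional_def)
  qed
qed

lemma profile_index_profile_of_index:
  assumes "r < K ^ n"
  shows "profile_index K n (profile_of_index K n r) = r"
proof -
  have "profile_index K n (profile_of_index K n r) = radix_value K n (\<lambda>j. digit K n j r)"
    unfolding profile_index_def by (rule radix_value_cong) (simp add: profile_of_index_def)
  then show ?thesis
    using radix_value_digit[OF assms] by simp
qed

lemma all_profiles_iff_all_indices:
  assumes "K \<ge> 1"
  shows "(\<forall>r<K ^ n. P (profile_of_index K n r)) \<longleftrightarrow> (\<forall>x\<in>profiles n K. P x)"
proof
  assume "\<forall>r<K ^ n. P (profile_of_index K n r)"
  then show "\<forall>x\<in>profiles n K. P x"
    using profile_index_less profile_of_index_profile_index by metis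
qed (use assms profile_of_index_in_profiles in blast)

lemma khatri_rao_sel_mat:
  assumes "\<And>c. c < nc \<Longrightarrow> g c < K"
  shows "khatri_rao (sel_mat M nc f) (sel_mat K nc g) = sel_mat (M * K) nc (\<lambda>c. f c * K + g c)"
proof (rule eq_matI)
  fix r c
  assume "r < dim_row (sel_mat (M * K) nc (\<lambda>c. f c * K + g c))"
    and "c < dim_col (sel_mat (M * K) nc (\<lambda>c. f c * K + g c))"
  then have r: "r < M * K" and c: "c < nc"
    by (auto simp: sel_mat_def)
  have "r = f c * K + g c \<longleftrightarrow> r div K = f c \<and> r mod K = g c"
  proof
    assume "r = f c * K + g c"
    then show "r div K = f c \<and> r mod K = g c"
      using assms[OF c] by simp
  next
    assume "r div K = f c \<and> r mod K = g c"
    then show "r = f c * K + g c"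
      by (metis div_mult_mod_eq)
  qed
  then show "khatri_rao (sel_mat M nc f) (sel_mat K nc g) $$ (r, c)
      = sel_mat (M * K) nc (\<lambda>c. f c * K + g c) $$ (r, c)"
    using r c assms[OF c] by (simp add: khatri_rao_def sel_mat_def less_mult_imp_div_less)
qed (simp_all add: khatri_rao_def sel_mat_def)

lemma foldl_khatri_rao_sel_mat:
  assumes "\<And>i c. i \<in> set is \<Longrightarrow> c < nc \<Longrightarrow> g i c < K"
  shows "foldl (\<lambda>A i. khatri_rao A (sel_mat K nc (g i))) (sel_mat M nc f) is
    = sel_mat (M * K ^ length is) nc (\<lambda>c. foldl (\<lambda>v i. v * K + g i c) (f c) is)"
  using assms
proof (induction "is" arbitrary: M f)
  case Nil
  then show ?case by simp
next
  case (Cons i "is")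
  then show ?case
    by (simp add: khatri_rao_sel_mat mult.assoc)
qed

lemma kron_sel_mat_col:
  assumes "b < K"
  shows "kron (sel_mat M 1 (\<lambda>_. a)) (sel_mat K 1 (\<lambda>_. b)) = sel_mat (M * K) 1 (\<lambda>_. a * K + b)"
proof -
  have "kron (sel_mat M 1 (\<lambda>_. a)) (sel_mat K 1 (\<lambda>_. b)) = khatri_rao (sel_mat M 1 (\<lambda>_. a)) (sel_mat K 1 (\<lambda>_. b))"
    unfolding kron_def khatri_rao_def sel_mat_def by (rule cong_mat) auto
  then show ?thesis
    using khatri_rao_sel_mat[of 1 "\<lambda>_. b"] assms by simp
qed

lemma foldl_kron_sel_mat_col:
  assumes "\<And>j. j \<in> set js \<Longrightarrow> d j < K"
  shows "foldl (\<lambda>A j. kron A (sel_mat K 1 (\<lambda>_. d j))) (sel_mat M 1 (\<lambda>_. a)) js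
    = sel_mat (M * K ^ length js) 1 (\<lambda>_. foldl (\<lambda>v j. v * K + d j) a js)"
  using assms
proof (induction js arbitrary: M a)
  case Nil
  then show ?case by simp
next
  case (Cons j js)
  have "d j < K" and "\<And>i. i \<in> set js \<Longrightarrow> d i < K"
    using Cons.prems by simp_all
  then show ?case
    unfolding foldl_Cons kron_sel_mat_col[OF \<open>d j < K\<close>]
    using Cons.IH[of "M * K" "a * K + d j"] by (simp add: mult.assoc)
qed

lemma mult_sel_mat_row:
  assumes "V \<in> carrier_mat 1 N" and "\<And>c. c < M \<Longrightarrow> h c < N"
  shows "V * sel_mat N M h = mat 1 M (\<lambda>(_, c). V $$ (0, h c))"
proof (rule eq_matI)
  fix a c
  assume "a < dim_row (mat 1 M (\<lambda>(_, c). V $$ (0, h c)))" and "c < dim_col (mat 1 M (\<lambda>(_, c). V $$ (0, h c)))"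
  then have a: "a = 0" and c: "c < M"
    by auto
  have "(\<Sum>k<N. V $$ (0, k) * (if k = h c then 1 else 0)) = V $$ (0, h c)"
    using assms(2)[OF c] by (simp add: if_distrib cong: if_cong)
  then show "(V * sel_mat N M h) $$ (a, c) = mat 1 M (\<lambda>(_, c). V $$ (0, h c)) $$ (a, c)"
    using assms(1) a c by (simp add: sel_mat_def scalar_prod_def atLeast0LessThan)
qed (use assms(1) in \<open>simp_all add: sel_mat_def\<close>)

lemma delta_eq_sel_mat: "delta K v = sel_mat K 1 (\<lambda>_. v - 1)"
  by (simp add: delta_def sel_mat_def)

lemma prof_kron_eq_sel_mat:
  assumes "x \<in> profiles n K"
  shows "prof_kron n K x = sel_mat (K ^ n) 1 (\<lambda>_. profile_index K n x)"
proof -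
  have one: "1\<^sub>m 1 = sel_mat 1 1 (\<lambda>_. 0)"
    by (auto simp: sel_mat_def)
  have range: "x j - 1 < K" if "j \<in> set [1..<n+1]" for j
    using profile_in_range[OF assms] that by fastforce
  show ?thesis
    using foldl_kron_sel_mat_col[where d = "\<lambda>j. x j - 1" and js = "[1..<n+1]" and M = 1 and a = 0, OF range]
    unfolding prof_kron_def delta_eq_sel_mat profile_index_def radix_value_def one
    by (simp del: upt_Suc)
qed

lemma payoff_vec_eq:
  assumes "K \<ge> 1"
  shows "payoff_vec n K c i = mat 1 (K ^ n) (\<lambda>(_, r). c i (profile_of_index K n r))"
proof -
  let ?V = "mat 1 (K ^ n) (\<lambda>(_, r). c i (profile_of_index K n r))"
  let ?represents = "\<lambda>V. V \<in> carrier_mat 1 (K ^ n) \<and> (\<forall>x\<in>profiles n K. V * prof_kron n K x = mat 1 1 (\<lambda>_. c i x))"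
  have "?V * prof_kron n K x = mat 1 1 (\<lambda>_. c i x)" if "x \<in> profiles n K" for x
    using that
    by (auto simp: prof_kron_eq_sel_mat mult_sel_mat_row profile_index_less profile_of_index_profile_index)
  then have represents: "?represents ?V"
    by simp
  have unique: "V = ?V" if V: "?represents V" for V
  proof -
    have "V $$ (0, r) = c i (profile_of_index K n r)" if r: "r < K ^ n" for r
    proof -
      let ?x = "profile_of_index K n r"
      have x: "?x \<in> profiles n K"
        using profile_of_index_in_profiles[OF assms] .
      have "V * prof_kron n K ?x = mat 1 1 (\<lambda>(_, _). V $$ (0, r))"
        using V r by (simp add: prof_kron_eq_sel_mat[OF x] mult_sel_mat_row profile_index_profile_of_index)
      moreover have "V * prof_kron n K ?x = mat 1 1 (\<lambda>_. c i ?x)"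
        using V x by blast
      ultimately show ?thesis
        by (simp add: mat_eq_iff)
    qed
    then show ?thesis
      using V by auto
  qed
  show ?thesis
    unfolding payoff_vec_def by (rule the_equality[of ?represents, OF represents unique])
qed

lemma Phi_eq_sel_mat:
  assumes "K \<ge> 1" and "i \<in> {1..n}"
  shows "Phi K n i = sel_mat K (K ^ n) (digit K n i)"
proof -
  have dims: "K ^ (i - 1) * K * K ^ (n - i) = K ^ n"
    using assms(2) by (simp flip: power_Suc2 power_add)
  show ?thesis
  proof (rule eq_matI)
    fix r c
    assume "r < dim_row (sel_mat K (K ^ n) (digit K n i))" and "c < dim_col (sel_mat K (K ^ n) (digit K n i))"
    then have r: "r < K" and c: "c < K ^ (i - 1) * K * K ^ (n - i)"
      using dims by (auto simp: sel_mat_def)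
    have "c div K ^ (n - i) < K ^ (i - 1) * K"
      using c by (simp add: less_mult_imp_div_less)
    then show "Phi K n i $$ (r, c) = sel_mat K (K ^ n) (digit K n i) $$ (r, c)"
      using r c dims assms(1)
      by (simp add: Phi_def kron_def ones_def digit_def sel_mat_def less_mult_imp_div_less)
  qed (use dims in \<open>simp_all add: Phi_def kron_def ones_def sel_mat_def\<close>)
qed

lemma T_mat_eq_sel_mat:
  assumes "K \<ge> 1" and "n \<ge> 1" and \<sigma>: "\<sigma> permutes {1..n}"
  shows "T_mat K n \<sigma> = sel_mat (K ^ n) (K ^ n) (\<lambda>c. radix_value K n (\<lambda>k. digit K n (inv_into UNIV \<sigma> k) c))"
proof -
  have Phi: "Phi K n (inv_into UNIV \<sigma> k) = sel_mat K (K ^ n) (digit K n (inv_into UNIV \<sigma> k))"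
    if "k \<in> {1..n}" for k
    using Phi_eq_sel_mat[OF assms(1) permutes_inv_into_in[OF \<sigma> that]] .
  have "T_mat K n \<sigma> = foldl (\<lambda>A k. khatri_rao A (sel_mat K (K ^ n) (digit K n (inv_into UNIV \<sigma> k))))
      (sel_mat K (K ^ n) (digit K n (inv_into UNIV \<sigma> 1))) [2..<n+1]"
    unfolding T_mat_def using assms(2) Phi by (intro foldl_cong) auto
  also have "\<dots> = sel_mat (K * K ^ length [2..<n+1]) (K ^ n)
      (\<lambda>c. foldl (\<lambda>v k. v * K + digit K n (inv_into UNIV \<sigma> k) c) (digit K n (inv_into UNIV \<sigma> 1) c) [2..<n+1])"
    by (rule foldl_khatri_rao_sel_mat) (rule digit_less[OF assms(1)])
  also have "K * K ^ length [2..<n+1] = K ^ n"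
    using assms(2) by (cases n) (simp_all del: upt_Suc)
  finally show ?thesis
    unfolding radix_value_from_first[OF assms(2)] .
qed

lemma payoff_vec_mult_T_mat:
  assumes "K \<ge> 1" and "n \<ge> 1" and \<sigma>: "\<sigma> permutes {1..n}"
  shows "payoff_vec n K c i * T_mat K n \<sigma>
    = mat 1 (K ^ n) (\<lambda>(_, r). c i (\<lambda>j\<in>{1..n}. profile_of_index K n r (inv_into UNIV \<sigma> j)))"
proof -
  have less: "radix_value K n (\<lambda>k. digit K n (inv_into UNIV \<sigma> k) r) < K ^ n" for r
    using assms(1) by (simp add: radix_value_less digit_less)
  have "profile_of_index K n (radix_value K n (\<lambda>k. digit K n (inv_into UNIV \<sigma> k) r))
      = (\<lambda>j\<in>{1..n}. profile_of_index K n r (inv_into UNIV \<sigma> j))" for r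
    using assms(1) permutes_inv_into_in[OF \<sigma>] by (auto simp: profile_of_index_def digit_radix_value digit_less)
  then show ?thesis
    using less by (auto simp: payoff_vec_eq[OF assms(1)] T_mat_eq_sel_mat[OF assms] mult_sel_mat_row)
qed

lemma row_mat_eq_iff: "mat 1 N f = mat 1 N g \<longleftrightarrow> (\<forall>r<N. f (0, r) = g (0, r))"
  by (auto simp: mat_eq_iff)

lemma payoff_vec_eq_smult_iff:
  assumes "K \<ge> 1" and "n \<ge> 1" and "\<sigma> permutes {1..n}"
  shows "payoff_vec n K c i = a \<cdot>\<^sub>m (payoff_vec n K c i' * T_mat K n \<sigma>)
    \<longleftrightarrow> (\<forall>x\<in>profiles n K. c i x = a * c i' (\<lambda>j\<in>{1..n}. x (inv_into UNIV \<sigma> j)))"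
proof -
  have rhs: "a \<cdot>\<^sub>m (payoff_vec n K c i' * T_mat K n \<sigma>)
      = mat 1 (K ^ n) (\<lambda>(_, r). a * c i' (\<lambda>j\<in>{1..n}. profile_of_index K n r (inv_into UNIV \<sigma> j)))"
    unfolding payoff_vec_mult_T_mat[OF assms] by (rule eq_matI) auto
  have "payoff_vec n K c i = a \<cdot>\<^sub>m (payoff_vec n K c i' * T_mat K n \<sigma>)
      \<longleftrightarrow> (\<forall>r<K ^ n. c i (profile_of_index K n r)
            = a * c i' (\<lambda>j\<in>{1..n}. profile_of_index K n r (inv_into UNIV \<sigma> j)))"
    unfolding rhs unfolding payoff_vec_eq[OF assms(1)] row_mat_eq_iff by simp
  also have "\<dots> \<longleftrightarrow> (\<forall>x\<in>profiles n K. c i x = a * c i' (\<lambda>j\<in>{1..n}. x (inv_into UNIV \<sigma> j)))"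
    by (rule all_profiles_iff_all_indices[OF assms(1)])
  finally show ?thesis .
qed

theorem proposition3p15:
  fixes n \<kappa> :: nat and c :: "nat \<Rightarrow> (nat \<Rightarrow> nat) \<Rightarrow> real"
  assumes "n \<ge> 2" and "\<kappa> \<ge> 1"
  shows "skew_symmetric n \<kappa> c \<longleftrightarrow>
    (\<forall>\<sigma>. \<sigma> permutes {1..n} \<longrightarrow>
       (\<forall>i\<in>{1..n}. payoff_vec n \<kappa> c i =
          of_int (sign \<sigma>) \<cdot>\<^sub>m (payoff_vec n \<kappa> c (\<sigma> i) * T_mat \<kappa> n \<sigma>)))"
proof -
  have "n \<ge> 1"
    using assms(1) by simp
  have "(\<forall>i\<in>{1..n}. payoff_vec n \<kappa> c i = of_int (sign \<sigma>) \<cdot>\<^sub>m (payoff_vec n \<kappa> c (\<sigma> i) * T_mat \<kappa> n \<sigma>))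
      \<longleftrightarrow> (\<forall>i\<in>{1..n}. \<forall>x\<in>profiles n \<kappa>.
            c i x = of_int (sign \<sigma>) * c (\<sigma> i) (\<lambda>j\<in>{1..n}. x (inv_into UNIV \<sigma> j)))"
    if "\<sigma> permutes {1..n}" for \<sigma>
    by (simp add: payoff_vec_eq_smult_iff[OF assms(2) \<open>n \<ge> 1\<close> that])
  then show ?thesis
    unfolding skew_symmetric_def by blast
qed

end
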